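(* $\mathrm{Tv}(\mathbb{Z} \times \mathbb{R}^k,m) = 2(m-1)(k+1) +1$.
   Context: For $S\subseteq\mathbb{R}^d$ and an integer $m\geq 2$, the Tverberg number $\mathrm{Tv}(S,m)$ is the smallest positive integer $n$ such that any multiset of $n$ points in $S$ admits a partition into $m$ submultisets $A_1,\dots,A_m$ with $\left(\bigcap_{i=1}^m\mathrm{conv}(A_i)\right)\cap S\neq\varnothing$ (and $\mathrm{Tv}(S,m)=\infty$ if no such number exists). Here $k$ is a positive integer and $m\geq 2$. *)

theory Defs
  imports "HOL-Analysis.Analysis" "HOL-Library.Extended_Nat"
begin

text \<open>A multiset of n points of S is represented as an indexed family x 0, ..., x (n-1)
  (repetitions allowed). A partition into m submultisets is an assignment f of each index
  to a part f i < m; part j is the submultiset of points with index in f^{-1}(j).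
  The convex hull of a multiset is the convex hull of its underlying set.\<close>

definition tverberg_prop :: "'a::real_vector set \<Rightarrow> nat \<Rightarrow> nat \<Rightarrow> bool" where
  "tverberg_prop S m n \<longleftrightarrow>
     (\<forall>x :: nat \<Rightarrow> 'a. (\<forall>i<n. x i \<in> S) \<longrightarrow>
        (\<exists>f :: nat \<Rightarrow> nat. (\<forall>i<n. f i < m) \<and>
           (\<Inter>j<m. convex hull (x ` {i. i < n \<and> f i = j})) \<inter> S \<noteq> {}))"

definition Tv :: "'a::real_vector set \<Rightarrow> nat \<Rightarrow> enat" where
  "Tv S m = (if \<exists>n>0. tverberg_prop S m n
             then enat (LEAST n. n > 0 \<and> tverberg_prop S m n) else \<infinity>)"

end

(*
  Let N = (m - 1)(k + 1) + 1 and take 2N - 1 points with integer first coordinate.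
  Sorted by first coordinate, the i-th smallest and the i-th largest point span a segment that
  meets the hyperplane through the median point, whose first coordinate is an integer.
  Tverberg's theorem in R^k partitions the N crossing points into m parts with a common point,
  and giving both ends of each segment the part of its crossing point yields a partition of the
  original points whose hulls share a point of that integer hyperplane.  Tverberg's theorem is
  obtained from the colorful Caratheodory theorem by Sarkaria's tensor trick, and the colorful
  Caratheodory theorem by Barany's argument: a colorful convex combination of minimal norm is 0.

  Put m - 1 copies of every vertex of a k-simplex on each of the layers 0 and 1.
  A Tverberg point with integer first coordinate lies on one of the layers.  For each vertex v,
  some part misses all copies of v on that layer, and this forces the barycentric coordinate of
  the Tverberg point at v to be nonpositive; but the barycentric coordinates sum to 1.
*)
theory Submission
  imports Defs "HOL-Homology.Simplices" "HOL-Library.Function_Algebras"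
begin

section \<open>A finite-dimensional space of sequences\<close>

(* The tensor space (R^(d+1))^(m-1) of Sarkaria's argument has a dimension depending on m,
   so it cannot be a type.  It is modelled by the sequences nat => 'v vanishing from index M,
   with the semi-inner product inner_upto M. *)
instantiation "fun" :: (type, real_vector) real_vector
begin

definition scaleR_fun :: "real \<Rightarrow> ('a \<Rightarrow> 'b) \<Rightarrow> 'a \<Rightarrow> 'b" where
  "scaleR_fun c f = (\<lambda>x. c *\<^sub>R f x)"

instance
  by standard (simp_all add: scaleR_fun_def fun_eq_iff scaleR_add_right scaleR_add_left)

end

lemma scaleR_fun_apply [simp]: "(c *\<^sub>R f) x = c *\<^sub>R f x"
  by (simp add: scaleR_fun_def)

lemma sum_fun_apply [simp]: "(\<Sum>a\<in>A. f a) x = (\<Sum>a\<in>A. f a x)"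
  by (induction A rule: infinite_finite_induct) auto

definition vanishing_from :: "nat \<Rightarrow> (nat \<Rightarrow> 'v::zero) set" where
  "vanishing_from M = {F. \<forall>l\<ge>M. F l = 0}"

lemma subspace_vanishing_from: "subspace (vanishing_from M)"
  by (auto simp: subspace_def vanishing_from_def)

lemma vanishing_from_subset_span:
  "vanishing_from M
    \<subseteq> span ((\<lambda>p l. if l = fst p then snd p else 0) ` ({..<M} \<times> (Basis :: 'v::euclidean_space set)))"
  (is "_ \<subseteq> span (?e ` ?I)")
proof
  fix F :: "nat \<Rightarrow> 'v" assume F: "F \<in> vanishing_from M"
  have "F = (\<Sum>p\<in>?I. (F (fst p) \<bullet> snd p) *\<^sub>R ?e p)"
  proof
    fix l
    have "(\<Sum>p\<in>?I. (F (fst p) \<bullet> snd p) *\<^sub>R ?e p) l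
        = (\<Sum>j<M. \<Sum>b\<in>Basis. (F j \<bullet> b) *\<^sub>R (if l = j then b else 0))"
      by (simp add: sum.cartesian_product split_def)
    also have "\<dots> = (\<Sum>j<M. if l = j then (\<Sum>b\<in>Basis. (F j \<bullet> b) *\<^sub>R b) else 0)"
      by (intro sum.cong) auto
    also have "\<dots> = F l"
      using F by (simp add: vanishing_from_def euclidean_representation)
    finally show "F l = (\<Sum>p\<in>?I. (F (fst p) \<bullet> snd p) *\<^sub>R ?e p) l" ..
  qed
  also have "\<dots> \<in> span (?e ` ?I)"
    by (intro span_sum span_scale span_base) auto
  finally show "F \<in> span (?e ` ?I)" .
qed

lemma vanishing_from_family_dependent:
  fixes u :: "nat \<Rightarrow> nat \<Rightarrow> 'v::euclidean_space"
  assumes u: "\<And>i. i < n \<Longrightarrow> u i \<in> vanishing_from M" and n: "M * DIM('v) < n"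
  shows "\<exists>c. (\<exists>i<n. c i \<noteq> 0) \<and> (\<Sum>i<n. c i *\<^sub>R u i) = 0"
proof (cases "inj_on u {..<n}")
  case False
  then obtain i i' where ii: "i < n" "i' < n" "i \<noteq> i'" "u i = u i'"
    by (auto simp: inj_on_def)
  define c where "c r = (if r = i then 1 else if r = i' then -1 else 0 :: real)" for r
  have "(\<Sum>r<n. c r *\<^sub>R u r) = (\<Sum>r\<in>{i, i'}. c r *\<^sub>R u r)"
    by (rule sum.mono_neutral_right) (auto simp: c_def ii)
  also have "\<dots> = 0"
    using ii by (simp add: c_def)
  finally show ?thesis
    using ii by (intro exI[of _ c]) (auto simp: c_def)
next
  case True
  let ?T = "(\<lambda>p l. if l = fst p then snd p else 0) ` ({..<M} \<times> (Basis :: 'v set))"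
  have "card ?T \<le> M * DIM('v)"
    using card_image_le[of "{..<M} \<times> (Basis :: 'v set)"] by (simp add: card_cartesian_product)
  moreover have "card (u ` {..<n}) = n"
    using True by (simp add: card_image)
  moreover have "u ` {..<n} \<subseteq> span ?T"
    using u vanishing_from_subset_span by blast
  ultimately have "dependent (u ` {..<n})"
    using independent_span_bound[of ?T "u ` {..<n}"] n by auto
  then obtain c where c: "\<exists>v\<in>u ` {..<n}. c v \<noteq> 0" "(\<Sum>v\<in>u ` {..<n}. c v *\<^sub>R v) = 0"
    using dependent_finite[of "u ` {..<n}"] by blast
  have "(\<Sum>i<n. c (u i) *\<^sub>R u i) = 0"
    using c(2) True by (simp add: sum.reindex)
  with c(1) show ?thesis
    by (intro exI[of _ "c \<circ> u"]) auto
qed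

definition inner_upto :: "nat \<Rightarrow> (nat \<Rightarrow> 'v::real_inner) \<Rightarrow> (nat \<Rightarrow> 'v) \<Rightarrow> real" where
  "inner_upto M F G = (\<Sum>l<M. F l \<bullet> G l)"

lemma linear_inner_upto: "linear (inner_upto M F)"
  by (rule linearI) (simp_all add: inner_upto_def inner_add_right sum.distrib sum_distrib_left)

lemmas inner_upto_add_right = linear_add[OF linear_inner_upto]
lemmas inner_upto_diff_right = linear_diff[OF linear_inner_upto]
lemmas inner_upto_scaleR_right = linear_scale[OF linear_inner_upto]
lemmas inner_upto_sum_right = linear_sum[OF linear_inner_upto]

lemma inner_upto_self_nonneg: "0 \<le> inner_upto M F F"
  by (simp add: inner_upto_def sum_nonneg)

lemma inner_upto_self_pos: "l < M \<Longrightarrow> F l \<noteq> 0 \<Longrightarrow> 0 < inner_upto M F F"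
  unfolding inner_upto_def by (rule sum_pos2[of _ l]) auto

lemma inner_upto_self_eq_0:
  assumes "q \<in> vanishing_from M"
  shows "inner_upto M q q = 0 \<longleftrightarrow> q = 0"
proof
  assume "inner_upto M q q = 0"
  then have "q l = 0" for l
    using inner_upto_self_pos[of l M q] assms by (cases "l < M") (auto simp: vanishing_from_def)
  then show "q = 0"
    by (simp add: fun_eq_iff)
qed (simp add: inner_upto_def)

lemma inner_upto_segment:
  "inner_upto M (q + e *\<^sub>R (t - q)) (q + e *\<^sub>R (t - q))
     = inner_upto M q q
       + e * (2 * (inner_upto M q t - inner_upto M q q) + e * inner_upto M (t - q) (t - q))"
  by (simp add: inner_upto_def inner_add_left inner_add_right inner_diff_left inner_diff_right
      inner_commute algebra_simps sum.distrib sum_subtractf sum_distrib_left)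

lemma inner_upto_first_order:
  assumes min: "\<And>e. 0 < e \<Longrightarrow> e \<le> 1 \<Longrightarrow>
      inner_upto M q q \<le> inner_upto M (q + e *\<^sub>R (t - q)) (q + e *\<^sub>R (t - q))"
  shows "inner_upto M q q \<le> inner_upto M q t"
proof (rule ccontr)
  define a where "a = inner_upto M q q - inner_upto M q t"
  define b where "b = inner_upto M (t - q) (t - q)"
  define e where "e = (if b = 0 then 1 else min 1 (a / b))"
  assume "\<not> ?thesis"
  then have a: "0 < a"
    by (simp add: a_def)
  have b: "0 \<le> b"
    by (simp add: b_def inner_upto_self_nonneg)
  have e: "0 < e" "e \<le> 1" "e * b \<le> a"
    using a b by (auto simp: e_def min_def field_simps)
  have "e * (2 * - a + e * b) \<le> e * - a"
    using e by (intro mult_left_mono) auto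
  also have "\<dots> < 0"
    using a e by (simp add: mult_pos_pos)
  finally have "inner_upto M (q + e *\<^sub>R (t - q)) (q + e *\<^sub>R (t - q)) < inner_upto M q q"
    by (simp add: inner_upto_segment a_def b_def)
  with min[OF e(1,2)] show False
    by simp
qed

lemma standard_simplex_iff:
  "x \<in> standard_simplex p \<longleftrightarrow> (\<forall>i. 0 \<le> x i) \<and> (\<forall>i>p. x i = 0) \<and> (\<Sum>i\<le>p. x i) = 1"
proof -
  have "x i \<le> 1" if "\<forall>i. 0 \<le> x i" "\<forall>i>p. x i = 0" "(\<Sum>i\<le>p. x i) = 1" for i
    using that member_le_sum[of i "{..p}" x] by (cases "i \<le> p") auto
  then show ?thesis
    by (auto simp: standard_simplex_def)
qed

lemma compact_standard_simplex: "compact (standard_simplex p)"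
  using compactin_standard_simplex[of p] by (simp add: euclidean_product_topology)

lemma continuous_on_inner_upto_combination:
  "continuous_on S (\<lambda>w. inner_upto M (\<Sum>i\<le>p. w i *\<^sub>R t i) (\<Sum>i\<le>p. w i *\<^sub>R t i))"
  unfolding inner_upto_def sum_fun_apply scaleR_fun_apply
  by (intro continuous_on_sum continuous_on_inner continuous_on_scaleR continuous_on_const
      continuous_on_subset[OF continuous_on_product_coordinates] subset_UNIV)

lemma finite_compact_attains_inf:
  fixes f :: "'a \<Rightarrow> 'b::topological_space \<Rightarrow> real"
  assumes "finite A" "A \<noteq> {}" "compact K" "K \<noteq> {}" "\<And>a. a \<in> A \<Longrightarrow> continuous_on K (f a)"
  obtains a x where "a \<in> A" "x \<in> K" "\<And>a' x'. a' \<in> A \<Longrightarrow> x' \<in> K \<Longrightarrow> f a x \<le> f a' x'"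
proof -
  have "\<forall>a\<in>A. \<exists>x\<in>K. \<forall>x'\<in>K. f a x \<le> f a x'"
    using continuous_attains_inf[OF assms(3,4)] assms(5) by blast
  then obtain g where g: "\<forall>a\<in>A. g a \<in> K \<and> (\<forall>x'\<in>K. f a (g a) \<le> f a x')"
    by (metis (no_types, lifting))
  define a where "a = arg_min_on (\<lambda>a. f a (g a)) A"
  have a: "a \<in> A" "\<And>a'. a' \<in> A \<Longrightarrow> f a (g a) \<le> f a' (g a')"
    using arg_min_if_finite[OF assms(1,2), of "\<lambda>a. f a (g a)"] by (auto simp: a_def not_less)
  show ?thesis
  proof (rule that)
    show "a \<in> A" "g a \<in> K"
      using a(1) g by auto
    show "f a (g a) \<le> f a' x'" if "a' \<in> A" "x' \<in> K" for a' x'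
      using a(2)[OF that(1)] g that by (blast intro: order_trans)
  qed
qed

lemma convex_combination_remove_point:
  fixes t :: "nat \<Rightarrow> 'a::real_vector"
  assumes w: "w \<in> standard_simplex p"
    and \<mu>: "\<exists>i\<le>p. \<mu> i \<noteq> 0" "(\<Sum>i\<le>p. \<mu> i) = 0" "(\<Sum>i\<le>p. \<mu> i *\<^sub>R t i) = 0"
  obtains w' where "w' \<in> standard_simplex p" "(\<Sum>i\<le>p. w' i *\<^sub>R t i) = (\<Sum>i\<le>p. w i *\<^sub>R t i)"
    "\<exists>i\<le>p. w' i = 0"
proof -
  define I where "I = {i. i \<le> p \<and> \<mu> i < 0}"
  have "I \<noteq> {}"
  proof
    assume "I = {}"
    then have "\<forall>i\<in>{..p}. 0 \<le> \<mu> i"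
      by (auto simp: I_def not_less)
    with \<mu>(2) have "\<forall>i\<in>{..p}. \<mu> i = 0"
      using sum_nonneg_eq_0_iff[of "{..p}" \<mu>] by simp
    with \<mu>(1) show False
      by auto
  qed
  moreover have "finite I"
    by (simp add: I_def)
  ultimately obtain k where k: "k \<in> I" "\<And>i. i \<in> I \<Longrightarrow> w k / - \<mu> k \<le> w i / - \<mu> i"
    using arg_min_if_finite(1,2)[of I "\<lambda>i. w i / - \<mu> i"] by (metis not_less)
  define s where "s = w k / - \<mu> k"
  define w' where "w' i = (if i \<le> p then w i + s * \<mu> i else 0)" for i
  have s: "0 \<le> s"
    using k(1) w by (simp add: s_def I_def standard_simplex_def divide_nonneg_neg)
  have "0 \<le> w' i" for i
  proof (cases "i \<in> I")
    case True
    then have "0 < - \<mu> i" "s \<le> w i / - \<mu> i"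
      using k(2)[of i] by (simp_all add: s_def I_def)
    then have "s * - \<mu> i \<le> w i"
      by (metis pos_le_divide_eq)
    then show ?thesis
      using True by (simp add: w'_def I_def)
  next
    case False
    then show ?thesis
      using s w by (auto simp: w'_def I_def standard_simplex_def not_less)
  qed
  moreover have "(\<Sum>i\<le>p. w' i) = 1"
    using w \<mu>(2) by (simp add: w'_def standard_simplex_def sum.distrib flip: sum_distrib_left)
  ultimately have "w' \<in> standard_simplex p"
    by (simp add: standard_simplex_iff w'_def)
  moreover have "(\<Sum>i\<le>p. w' i *\<^sub>R t i) = (\<Sum>i\<le>p. w i *\<^sub>R t i)"
    using \<mu>(3)
    by (simp add: w'_def scaleR_add_left sum.distrib flip: scaleR_scaleR scaleR_sum_right)
  moreover have "w' k = 0"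
    using k(1) by (simp add: w'_def s_def I_def)
  ultimately show ?thesis
    using k(1) that by (auto simp: I_def)
qed

lemma scaled_sum_in_convex_hull:
  fixes y :: "nat \<Rightarrow> 'a::real_vector"
  assumes "finite P" "\<And>i. i \<in> P \<Longrightarrow> 0 \<le> w i" "0 < sum w P"
  shows "(1 / sum w P) *\<^sub>R (\<Sum>i\<in>P. w i *\<^sub>R y i) \<in> convex hull (y ` P)"
proof -
  have "(\<Sum>i\<in>P. (w i / sum w P) *\<^sub>R y i) \<in> convex hull (y ` P)"
    using assms by (intro convex_sum convex_convex_hull hull_inc)
      (auto simp: sum_divide_distrib[symmetric])
  then show ?thesis
    by (simp add: scaleR_sum_right)
qed

section \<open>The colorful Caratheodory theorem\<close>

lemma hyperplane_points_affinely_dependent: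
  fixes t :: "nat \<Rightarrow> nat \<Rightarrow> 'v::euclidean_space"
  assumes t: "\<And>i. i \<le> p \<Longrightarrow> t i \<in> vanishing_from M" and q: "q \<in> vanishing_from M"
    and p: "M * DIM('v) \<le> p" and pos: "0 < inner_upto M q q"
    and hyp: "\<And>i. i \<le> p \<Longrightarrow> inner_upto M q (t i) = inner_upto M q q"
  shows "\<exists>\<mu>. (\<exists>i\<le>p. \<mu> i \<noteq> 0) \<and> (\<Sum>i\<le>p. \<mu> i) = 0 \<and> (\<Sum>i\<le>p. \<mu> i *\<^sub>R t i) = 0"
proof -
  define u where "u i = (if i = 0 then q else t i - t 0)" for i
  have "u i \<in> vanishing_from M" if "i < Suc p" for i
    using that t q by (auto simp: u_def vanishing_from_def)
  then obtain c where c: "\<exists>i<Suc p. c i \<noteq> 0" "(\<Sum>i<Suc p. c i *\<^sub>R u i) = 0"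
    using vanishing_from_family_dependent[of "Suc p" u M] p by auto
  have sum_c: "(\<Sum>i\<le>p. c i *\<^sub>R u i) = c 0 *\<^sub>R q + (\<Sum>i\<in>{..p} - {0}. c i *\<^sub>R (t i - t 0))"
    by (simp add: sum.remove[of "{..p}" 0] u_def)
  have "inner_upto M q (t i - t 0) = 0" if "i \<le> p" for i
    using hyp[OF that] hyp[of 0] by (simp add: inner_upto_diff_right)
  moreover have "inner_upto M q (c 0 *\<^sub>R q + (\<Sum>i\<in>{..p} - {0}. c i *\<^sub>R (t i - t 0))) = 0"
    using c(2) by (simp add: lessThan_Suc_atMost sum_c inner_upto_def)
  ultimately have "c 0 * inner_upto M q q = 0"
    by (simp add: inner_upto_add_right inner_upto_sum_right inner_upto_scaleR_right)
  then have c0: "c 0 = 0"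
    using pos by simp
  obtain k where "k \<le> p" "c k \<noteq> 0"
    using c(1) by (auto simp: less_Suc_eq_le)
  define \<mu> where "\<mu> i = (if i = 0 then - (\<Sum>j\<in>{..p} - {0}. c j) else c i)" for i
  have "(\<Sum>i\<le>p. \<mu> i) = 0"
    by (simp add: sum.remove[of "{..p}" 0] \<mu>_def)
  moreover have "(\<Sum>i\<le>p. \<mu> i *\<^sub>R t i) = (\<Sum>i\<in>{..p} - {0}. c i *\<^sub>R (t i - t 0))"
  proof -
    have "(\<Sum>i\<le>p. \<mu> i *\<^sub>R t i) = - (\<Sum>j\<in>{..p} - {0}. c j) *\<^sub>R t 0 + (\<Sum>i\<in>{..p} - {0}. c i *\<^sub>R t i)"
      by (simp add: sum.remove[of "{..p}" 0] \<mu>_def)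
    then show ?thesis
      by (simp add: scaleR_diff_right sum_subtractf scaleR_sum_left)
  qed
  moreover have "\<exists>i\<le>p. \<mu> i \<noteq> 0"
    using \<open>k \<le> p\<close> \<open>c k \<noteq> 0\<close> c0 by (intro exI[of _ k]) (auto simp: \<mu>_def)
  moreover have "(\<Sum>i\<in>{..p} - {0}. c i *\<^sub>R (t i - t 0)) = 0"
    using c(2) sum_c c0 by (simp add: lessThan_Suc_atMost)
  ultimately show ?thesis
    by (intro exI[of _ \<mu>]) simp
qed

lemma simplex_minimizer_first_order:
  fixes t :: "nat \<Rightarrow> nat \<Rightarrow> 'v::real_inner"
  assumes w: "w \<in> standard_simplex p" and i: "i \<le> p"
    and min: "\<And>w'. w' \<in> standard_simplex p \<Longrightarrow>
      inner_upto M (\<Sum>j\<le>p. w j *\<^sub>R t j) (\<Sum>j\<le>p. w j *\<^sub>R t j)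
        \<le> inner_upto M (\<Sum>j\<le>p. w' j *\<^sub>R t j) (\<Sum>j\<le>p. w' j *\<^sub>R t j)"
  shows "inner_upto M (\<Sum>j\<le>p. w j *\<^sub>R t j) (\<Sum>j\<le>p. w j *\<^sub>R t j)
    \<le> inner_upto M (\<Sum>j\<le>p. w j *\<^sub>R t j) (t i)"
proof (rule inner_upto_first_order)
  fix e :: real
  assume e: "0 < e" "e \<le> 1"
  let ?q = "\<Sum>j\<le>p. w j *\<^sub>R t j"
  define w' where "w' = (\<lambda>j. (1 - e) * w j + e * (if j = i then 1 else 0))"
  have "(\<Sum>j\<le>p. w' j *\<^sub>R t j) = (\<Sum>j\<le>p. (1 - e) *\<^sub>R (w j *\<^sub>R t j) + (if j = i then e *\<^sub>R t j else 0))"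
    by (intro sum.cong) (auto simp: w'_def scaleR_add_left)
  also have "\<dots> = (1 - e) *\<^sub>R ?q + e *\<^sub>R t i"
    using i by (simp add: sum.distrib scaleR_sum_right)
  also have "\<dots> = ?q + e *\<^sub>R (t i - ?q)"
    by (simp add: algebra_simps)
  moreover have "w' \<in> standard_simplex p"
    unfolding w'_def using w i e by (intro convex_standard_simplex) auto
  ultimately show
    "inner_upto M ?q ?q \<le> inner_upto M (?q + e *\<^sub>R (t i - ?q)) (?q + e *\<^sub>R (t i - ?q))"
    using min[of w'] by simp
qed

lemma simplex_minimizer_zero_weight:
  fixes t :: "nat \<Rightarrow> nat \<Rightarrow> 'v::euclidean_space"
  assumes w: "w \<in> standard_simplex p" and t: "\<And>i. i \<le> p \<Longrightarrow> t i \<in> vanishing_from M"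
    and p: "M * DIM('v) \<le> p"
    and min: "\<And>w'. w' \<in> standard_simplex p \<Longrightarrow>
      inner_upto M (\<Sum>j\<le>p. w j *\<^sub>R t j) (\<Sum>j\<le>p. w j *\<^sub>R t j)
        \<le> inner_upto M (\<Sum>j\<le>p. w' j *\<^sub>R t j) (\<Sum>j\<le>p. w' j *\<^sub>R t j)"
    and pos: "0 < inner_upto M (\<Sum>j\<le>p. w j *\<^sub>R t j) (\<Sum>j\<le>p. w j *\<^sub>R t j)"
  obtains w' where "w' \<in> standard_simplex p" "(\<Sum>j\<le>p. w' j *\<^sub>R t j) = (\<Sum>j\<le>p. w j *\<^sub>R t j)"
    "\<exists>i\<le>p. w' i = 0"
proof (cases "\<exists>i\<le>p. w i = 0")
  case True
  with w that show ?thesis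
    by blast
next
  case False
  define q where "q = (\<Sum>j\<le>p. w j *\<^sub>R t j)"
  have w_pos: "0 < w i" if "i \<le> p" for i
    using False w that by (auto simp: standard_simplex_def order_le_less)
  have first_order: "inner_upto M q q \<le> inner_upto M q (t i)" if "i \<le> p" for i
    using simplex_minimizer_first_order[OF w that min] by (simp add: q_def)
  have "(\<Sum>i\<le>p. w i * (inner_upto M q (t i) - inner_upto M q q))
      = inner_upto M q q - inner_upto M q q"
    using w by (simp add: right_diff_distrib sum_subtractf inner_upto_sum_right
        inner_upto_scaleR_right standard_simplex_def q_def flip: sum_distrib_right)
  moreover have "\<forall>i\<in>{..p}. 0 \<le> w i * (inner_upto M q (t i) - inner_upto M q q)"
    using first_order w_pos by (simp add: less_imp_le)
  ultimately have "\<forall>i\<in>{..p}. w i * (inner_upto M q (t i) - inner_upto M q q) = 0"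
    using sum_nonneg_eq_0_iff[of "{..p}" "\<lambda>i. w i * (inner_upto M q (t i) - inner_upto M q q)"]
    by simp
  then have hyp: "inner_upto M q (t i) = inner_upto M q q" if "i \<le> p" for i
    using that w_pos[OF that] by force
  have "q \<in> vanishing_from M"
    unfolding q_def using t subspace_vanishing_from
    by (intro subspace_sum subspace_scale) auto
  moreover have "0 < inner_upto M q q"
    using pos by (simp add: q_def)
  ultimately obtain \<mu> where "\<exists>i\<le>p. \<mu> i \<noteq> 0" "(\<Sum>i\<le>p. \<mu> i) = 0" "(\<Sum>i\<le>p. \<mu> i *\<^sub>R t i) = 0"
    using hyperplane_points_affinely_dependent[of p t M q] t p hyp by blast
  with convex_combination_remove_point[OF w] that show ?thesis
    by blast
qed

lemma colorful_minimizer_eq_0: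
  fixes v :: "nat \<Rightarrow> nat \<Rightarrow> nat \<Rightarrow> 'v::euclidean_space"
  assumes m: "0 < m" and p: "M * DIM('v) \<le> p"
    and v: "\<And>i j. i \<le> p \<Longrightarrow> j < m \<Longrightarrow> v i j \<in> vanishing_from M"
    and centred: "\<And>i. i \<le> p \<Longrightarrow> (\<Sum>j<m. v i j) = 0"
    and \<sigma>: "\<sigma> \<in> {..p} \<rightarrow>\<^sub>E {..<m}" and w: "w \<in> standard_simplex p"
    and min: "\<And>\<sigma>' w'. \<sigma>' \<in> {..p} \<rightarrow>\<^sub>E {..<m} \<Longrightarrow> w' \<in> standard_simplex p \<Longrightarrow>
      inner_upto M (\<Sum>i\<le>p. w i *\<^sub>R v i (\<sigma> i)) (\<Sum>i\<le>p. w i *\<^sub>R v i (\<sigma> i))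
        \<le> inner_upto M (\<Sum>i\<le>p. w' i *\<^sub>R v i (\<sigma>' i)) (\<Sum>i\<le>p. w' i *\<^sub>R v i (\<sigma>' i))"
  shows "(\<Sum>i\<le>p. w i *\<^sub>R v i (\<sigma> i)) = 0"
proof -
  define q where "q = (\<Sum>i\<le>p. w i *\<^sub>R v i (\<sigma> i))"
  have v\<sigma>: "v i (\<sigma> i) \<in> vanishing_from M" if "i \<le> p" for i
    using \<sigma> v that by (auto simp: PiE_iff)
  \<comment> \<open>If \<open>q \<noteq> 0\<close>, some weight can be made 0 without moving \<open>q\<close>; recoloring that index with a
    point in the halfspace \<open>inner_upto M q _ \<le> 0\<close> then yields a combination of smaller norm.\<close>
  show ?thesis
    unfolding q_def[symmetric]
  proof (rule ccontr)
    assume "q \<noteq> 0"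
    moreover have "q \<in> vanishing_from M"
      unfolding q_def using v\<sigma> subspace_vanishing_from
      by (intro subspace_sum subspace_scale) auto
    ultimately have pos: "0 < inner_upto M q q"
      using inner_upto_self_eq_0[of q M] inner_upto_self_nonneg[of M q] by simp
    obtain w' i where w': "w' \<in> standard_simplex p" "(\<Sum>j\<le>p. w' j *\<^sub>R v j (\<sigma> j)) = q"
      and i: "i \<le> p" "w' i = 0"
      using simplex_minimizer_zero_weight[OF w v\<sigma> p min[OF \<sigma>] pos[unfolded q_def]]
      unfolding q_def by blast
    have "(\<Sum>j<m. inner_upto M q (v i j)) = 0"
      using centred[OF i(1)] inner_upto_sum_right[of M q "v i" "{..<m}"]
      by (simp add: inner_upto_def)
    moreover have "(\<Sum>j<m. inner_upto M q (v i j)) > 0" if "\<forall>j<m. inner_upto M q (v i j) > 0"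
      using m that by (intro sum_pos) auto
    ultimately obtain j where j: "j < m" "inner_upto M q (v i j) \<le> 0"
      by (metis not_le order_less_irrefl)
    define \<sigma>' where "\<sigma>' = \<sigma>(i := j)"
    have \<sigma>': "\<sigma>' \<in> {..p} \<rightarrow>\<^sub>E {..<m}"
      using \<sigma> i j by (auto simp: \<sigma>'_def PiE_iff extensional_def)
    have q': "(\<Sum>k\<le>p. w' k *\<^sub>R v k (\<sigma>' k)) = q"
      unfolding w'(2)[symmetric] using i(2) by (intro sum.cong) (auto simp: \<sigma>'_def)
    have "inner_upto M q q \<le> inner_upto M q (v i (\<sigma>' i))"
      using simplex_minimizer_first_order[OF w'(1) i(1), of M "\<lambda>k. v k (\<sigma>' k)"] min[OF \<sigma>'] q'
      by (simp add: q_def)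
    with j pos show False
      by (simp add: \<sigma>'_def)
  qed
qed

theorem colorful_caratheodory:
  fixes v :: "nat \<Rightarrow> nat \<Rightarrow> nat \<Rightarrow> 'v::euclidean_space"
  assumes m: "0 < m" and p: "M * DIM('v) \<le> p"
    and v: "\<And>i j. i \<le> p \<Longrightarrow> j < m \<Longrightarrow> v i j \<in> vanishing_from M"
    and centred: "\<And>i. i \<le> p \<Longrightarrow> (\<Sum>j<m. v i j) = 0"
  obtains \<sigma> w where "\<forall>i\<le>p. \<sigma> i < m" "w \<in> standard_simplex p" "(\<Sum>i\<le>p. w i *\<^sub>R v i (\<sigma> i)) = 0"
proof -
  let ?C = "{..p} \<rightarrow>\<^sub>E {..<m}"
  let ?\<Phi> = "\<lambda>\<sigma> w. inner_upto M (\<Sum>i\<le>p. w i *\<^sub>R v i (\<sigma> i)) (\<Sum>i\<le>p. w i *\<^sub>R v i (\<sigma> i))"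
  obtain \<sigma> w where \<sigma>: "\<sigma> \<in> ?C" and w: "w \<in> standard_simplex p"
    and min: "\<And>\<sigma>' w'. \<sigma>' \<in> ?C \<Longrightarrow> w' \<in> standard_simplex p \<Longrightarrow> ?\<Phi> \<sigma> w \<le> ?\<Phi> \<sigma>' w'"
  proof (rule finite_compact_attains_inf[of ?C "standard_simplex p" ?\<Phi>])
    show "finite ?C" "?C \<noteq> {}"
      using m by (auto simp: finite_PiE PiE_eq_empty_iff)
    show "continuous_on (standard_simplex p) (?\<Phi> \<sigma>)" for \<sigma>
      by (rule continuous_on_inner_upto_combination)
  qed (use compact_standard_simplex nonempty_standard_simplex in auto)
  moreover have "(\<Sum>i\<le>p. w i *\<^sub>R v i (\<sigma> i)) = 0"
    using m p v centred \<sigma> w min by (rule colorful_minimizer_eq_0)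
  moreover have "\<forall>i\<le>p. \<sigma> i < m"
    using \<sigma> by (auto simp: PiE_iff)
  ultimately show ?thesis
    using that w by blast
qed

section \<open>Tverberg's theorem\<close>

lemma balanced_parts_common_point:
  fixes y :: "nat \<Rightarrow> 'a::real_vector" and \<sigma> :: "nat \<Rightarrow> nat"
  assumes m: "0 < m" and w: "w \<in> standard_simplex p" and \<sigma>: "\<forall>i\<le>p. \<sigma> i < m"
    and balanced: "\<And>j. j < m \<Longrightarrow> (\<Sum>i | i \<le> p \<and> \<sigma> i = j. w i *\<^sub>R (y i, 1 :: real)) = W"
  obtains x where "\<And>j. j < m \<Longrightarrow> x \<in> convex hull (y ` {i. i \<le> p \<and> \<sigma> i = j})"
proof
  define part where "part j = {i. i \<le> p \<and> \<sigma> i = j}" for j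
  have weight: "sum w (part j) = snd W" if "j < m" for j
    using arg_cong[OF balanced[OF that], of snd] by (simp add: part_def snd_sum)
  have \<sigma>_range: "\<sigma> ` {..p} \<subseteq> {..<m}"
    using \<sigma> by auto
  have "(\<Sum>j<m. sum w (part j)) = (\<Sum>i\<le>p. w i)"
    using sum.group[OF finite_atMost finite_lessThan \<sigma>_range, of w] by (simp add: part_def)
  also have "\<dots> = 1"
    using w by (simp add: standard_simplex_def)
  finally have "real m * snd W = 1"
    using weight by simp
  then have W_pos: "0 < snd W"
    using m by (metis of_nat_0_less_iff zero_less_mult_pos zero_less_one)
  fix j assume j: "j < m"
  have "(1 / snd W) *\<^sub>R fst W = (1 / sum w (part j)) *\<^sub>R (\<Sum>i\<in>part j. w i *\<^sub>R y i)"
    using arg_cong[OF balanced[OF j], of fst] weight[OF j] by (simp add: part_def fst_sum)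
  also have "\<dots> \<in> convex hull (y ` part j)"
    using w W_pos weight[OF j]
    by (intro scaled_sum_in_convex_hull) (auto simp: part_def standard_simplex_def)
  finally show "(1 / snd W) *\<^sub>R fst W \<in> convex hull (y ` {i. i \<le> p \<and> \<sigma> i = j})"
    by (simp add: part_def)
qed

(* Sarkaria's vectors: sarkaria_coeff M 0, ..., sarkaria_coeff M M are M + 1 vectors of R^M
   whose only linear relation is that they sum to 0. *)
definition sarkaria_coeff :: "nat \<Rightarrow> nat \<Rightarrow> nat \<Rightarrow> real" where
  "sarkaria_coeff M j l = (if j < M then (if l = j then 1 else 0) else if l < M then -1 else 0)"

lemma sum_sarkaria_coeff: "(\<Sum>j<Suc M. sarkaria_coeff M j l) = 0"
proof -
  have "(\<Sum>j<M. sarkaria_coeff M j l) = (\<Sum>j<M. if l = j then 1 else 0)"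
    by (intro sum.cong) (auto simp: sarkaria_coeff_def)
  then show ?thesis
    by (simp add: sarkaria_coeff_def)
qed

theorem tverberg:
  assumes m: "0 < m"
  shows "tverberg_prop (UNIV :: 'a::euclidean_space set) m ((m - 1) * (DIM('a) + 1) + 1)"
  unfolding tverberg_prop_def
proof (intro allI impI)
  fix y :: "nat \<Rightarrow> 'a"
  define M where "M = m - 1"
  define p where "p = M * (DIM('a) + 1)"
  define v where "v i j l = sarkaria_coeff M j l *\<^sub>R (y i, 1 :: real)" for i j l
  have mM: "m = Suc M"
    using m by (simp add: M_def)
  obtain \<sigma> w where \<sigma>: "\<forall>i\<le>p. \<sigma> i < m" and w: "w \<in> standard_simplex p"
    and zero: "(\<Sum>i\<le>p. w i *\<^sub>R v i (\<sigma> i)) = 0"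
  proof (rule colorful_caratheodory[OF m, of M p v])
    show "M * DIM('a \<times> real) \<le> p"
      by (simp add: p_def)
    show "v i j \<in> vanishing_from M" for i j
      by (simp add: vanishing_from_def v_def sarkaria_coeff_def zero_prod_def)
    show "(\<Sum>j<m. v i j) = 0" for i
    proof
      fix l
      have "(\<Sum>j<m. v i j) l = (\<Sum>j<Suc M. sarkaria_coeff M j l) *\<^sub>R (y i, 1)"
        by (simp only: v_def mM sum_fun_apply scaleR_sum_left)
      then show "(\<Sum>j<m. v i j) l = 0 l"
        unfolding sum_sarkaria_coeff by (simp add: zero_prod_def)
    qed
  qed
  define W where "W j = (\<Sum>i | i \<le> p \<and> \<sigma> i = j. w i *\<^sub>R (y i, 1 :: real))" for j
  have "W l = W M" if "l < M" for l
  proof -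
    have "0 = (\<Sum>i\<le>p. w i *\<^sub>R v i (\<sigma> i) l)"
      using zero by (simp add: fun_eq_iff)
    also have "\<dots> = (\<Sum>i\<le>p. (if \<sigma> i = l then w i *\<^sub>R (y i, 1) else 0))
        - (\<Sum>i\<le>p. (if \<sigma> i = M then w i *\<^sub>R (y i, 1) else 0))"
      unfolding sum_subtractf[symmetric] using \<sigma> that
      by (intro sum.cong) (auto simp: v_def sarkaria_coeff_def mM zero_prod_def)
    also have "\<dots> = W l - W M"
      unfolding W_def atMost_iff[symmetric] Collect_conj_eq[symmetric]
      by (simp only: sum.inter_filter[OF finite_atMost])
    finally show ?thesis
      by simp
  qed
  then have "W j = W M" if "j < m" for j
    using that by (cases "j < M") (auto simp: mM less_Suc_eq)
  then obtain x where "\<And>j. j < m \<Longrightarrow> x \<in> convex hull (y ` {i. i \<le> p \<and> \<sigma> i = j})"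
    using balanced_parts_common_point[OF m w \<sigma>, of y "W M"] by (auto simp: W_def)
  moreover have N: "(m - 1) * (DIM('a) + 1) + 1 = Suc p"
    by (simp add: p_def M_def)
  ultimately show "\<exists>f. (\<forall>i<(m - 1) * (DIM('a) + 1) + 1. f i < m) \<and>
    (\<Inter>j<m. convex hull (y ` {i. i < (m - 1) * (DIM('a) + 1) + 1 \<and> f i = j})) \<inter> UNIV \<noteq> {}"
    using \<sigma> unfolding N less_Suc_eq_le by (intro exI[of _ \<sigma>]) blast
qed

section \<open>Tverberg partitions of points with integer first coordinate\<close>

lemma sorting_permutation:
  fixes g :: "nat \<Rightarrow> 'b::linorder"
  obtains \<pi> where "bij_betw \<pi> {..<n} {..<n}" "\<And>s s'. s \<le> s' \<Longrightarrow> s' < n \<Longrightarrow> g (\<pi> s) \<le> g (\<pi> s')"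
proof
  let ?L = "sort_key g [0..<n]"
  show "bij_betw ((!) ?L) {..<n} {..<n}"
    by (rule bij_betw_nth) auto
  show "g (?L ! s) \<le> g (?L ! s')" if "s \<le> s'" "s' < n" for s s'
    using sorted_nth_mono[of "map g ?L" s s'] that by simp
qed

lemma segment_crosses_hyperplane:
  fixes a b :: "real \<times> 'a::euclidean_space"
  assumes "fst a \<le> z" "z \<le> fst b"
  shows "\<exists>q. (z, q) \<in> closed_segment a b"
proof -
  obtain c where "c \<in> closed_segment a b" "fst c = z"
    using connected_ivt_component[of "closed_segment a b" a b "(1, 0)" z] assms
    by (auto simp: inner_prod_def)
  then show ?thesis
    by (metis prod.collapse)
qed

lemma median_crossing_points:
  fixes x :: "nat \<Rightarrow> real \<times> 'a::euclidean_space"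
  obtains \<pi> c where "bij_betw \<pi> {..2 * p} {..2 * p}"
    "\<And>i. i \<le> p \<Longrightarrow> (fst (x (\<pi> p)), c i) \<in> closed_segment (x (\<pi> i)) (x (\<pi> (2 * p - i)))"
proof -
  obtain \<pi> where \<pi>: "bij_betw \<pi> {..<Suc (2 * p)} {..<Suc (2 * p)}"
    and sorted: "\<And>s s'. s \<le> s' \<Longrightarrow> s' < Suc (2 * p) \<Longrightarrow> fst (x (\<pi> s)) \<le> fst (x (\<pi> s'))"
    using sorting_permutation[of "Suc (2 * p)" "\<lambda>i. fst (x i)"] by blast
  have "\<exists>q. (fst (x (\<pi> p)), q) \<in> closed_segment (x (\<pi> i)) (x (\<pi> (2 * p - i)))" if "i \<le> p" for i
    using that by (intro segment_crosses_hyperplane sorted) auto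
  then obtain c
    where "\<And>i. i \<le> p \<Longrightarrow> (fst (x (\<pi> p)), c i) \<in> closed_segment (x (\<pi> i)) (x (\<pi> (2 * p - i)))"
    by metis
  moreover from \<pi> have "bij_betw \<pi> {..2 * p} {..2 * p}"
    by (simp add: lessThan_Suc_atMost)
  ultimately show ?thesis
    using that by blast
qed

lemma Pair_in_convex_hull_slice:
  assumes "convex X" "\<And>i. i \<in> I \<Longrightarrow> (z, c i) \<in> X" "c\<^sub>0 \<in> convex hull (c ` I)"
  shows "(z, c\<^sub>0) \<in> X"
proof -
  have "convex hull ({z} \<times> c ` I) \<subseteq> X"
    using assms(1,2) by (intro hull_minimal) auto
  with assms(3) show ?thesis
    by (auto simp: convex_hull_Times)
qed

lemma paired_partition_common_point:
  fixes x :: "nat \<Rightarrow> real \<times> 'a::real_vector"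
  assumes \<pi>: "bij_betw \<pi> {..2 * p} {..2 * p}"
    and c: "\<And>i. i \<le> p \<Longrightarrow> (z, c i) \<in> closed_segment (x (\<pi> i)) (x (\<pi> (2 * p - i)))"
    and g: "\<forall>i\<le>p. g i < m"
    and c\<^sub>0: "\<And>j. j < m \<Longrightarrow> c\<^sub>0 \<in> convex hull (c ` {i. i \<le> p \<and> g i = j})"
  shows "\<exists>f. (\<forall>r\<le>2 * p. f r < m) \<and>
    (\<forall>j<m. (z, c\<^sub>0) \<in> convex hull (x ` {r. r \<le> 2 * p \<and> f r = j}))"
proof -
  define f where "f r = g (min (inv_into {..2 * p} \<pi> r) (2 * p - inv_into {..2 * p} \<pi> r))" for r
  have f\<pi>: "f (\<pi> s) = g (min s (2 * p - s))" if "s \<le> 2 * p" for s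
    using \<pi> that by (simp add: f_def bij_betw_def inv_into_f_f)
  have "f r < m" if "r \<le> 2 * p" for r
  proof -
    obtain s where "s \<le> 2 * p" "r = \<pi> s"
      using bij_betw_imp_surj_on[OF \<pi>] \<open>r \<le> 2 * p\<close> by force
    then show ?thesis
      using g f\<pi> by simp
  qed
  moreover have "(z, c\<^sub>0) \<in> convex hull (x ` {r. r \<le> 2 * p \<and> f r = j})" if j: "j < m" for j
  proof (rule Pair_in_convex_hull_slice[OF convex_convex_hull _ c\<^sub>0[OF j]])
    let ?X = "convex hull (x ` {r. r \<le> 2 * p \<and> f r = j})"
    fix i assume i: "i \<in> {i. i \<le> p \<and> g i = j}"
    then have "min i (2 * p - i) = i" "min (2 * p - i) (2 * p - (2 * p - i)) = i"
      by auto
    with i have "\<pi> i \<in> {r. r \<le> 2 * p \<and> f r = j}" "\<pi> (2 * p - i) \<in> {r. r \<le> 2 * p \<and> f r = j}"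
      using bij_betw_apply[OF \<pi>] f\<pi>[of i] f\<pi>[of "2 * p - i"] by auto
    then have "closed_segment (x (\<pi> i)) (x (\<pi> (2 * p - i))) \<subseteq> ?X"
      by (intro closed_segment_subset convex_convex_hull hull_inc imageI)
    with c i show "(z, c i) \<in> ?X"
      by auto
  qed
  ultimately show ?thesis
    by blast
qed

theorem tverberg_prop_integer_layers:
  assumes m: "0 < m"
  shows "tverberg_prop {p :: real \<times> 'a::euclidean_space. fst p \<in> \<int>} m
    (2 * ((m - 1) * (DIM('a) + 1)) + 1)"
    (is "tverberg_prop ?S m _")
proof -
  define p where "p = (m - 1) * (DIM('a) + 1)"
  have "tverberg_prop ?S m (Suc (2 * p))"
    unfolding tverberg_prop_def
  proof (intro allI impI)
    fix x :: "nat \<Rightarrow> real \<times> 'a"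
    assume x: "\<forall>i<Suc (2 * p). x i \<in> ?S"
    obtain \<pi> c where \<pi>: "bij_betw \<pi> {..2 * p} {..2 * p}"
      and c: "\<And>i. i \<le> p \<Longrightarrow> (fst (x (\<pi> p)), c i) \<in> closed_segment (x (\<pi> i)) (x (\<pi> (2 * p - i)))"
      using median_crossing_points[of p x] by blast
    have tv: "tverberg_prop (UNIV :: 'a set) m (Suc p)"
      using tverberg[OF m] by (simp add: p_def)
    obtain g where "\<forall>i<Suc p. g i < m"
      and "(\<Inter>j<m. convex hull (c ` {i. i < Suc p \<and> g i = j})) \<noteq> {}"
      using tv[unfolded tverberg_prop_def, rule_format, of c] by auto
    then obtain c\<^sub>0 where g: "\<forall>i\<le>p. g i < m"
      and c\<^sub>0: "\<And>j. j < m \<Longrightarrow> c\<^sub>0 \<in> convex hull (c ` {i. i \<le> p \<and> g i = j})"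
      unfolding less_Suc_eq_le by blast
    obtain f where f: "\<forall>r\<le>2 * p. f r < m"
      and common: "\<And>j. j < m \<Longrightarrow> (fst (x (\<pi> p)), c\<^sub>0) \<in> convex hull (x ` {r. r \<le> 2 * p \<and> f r = j})"
      using paired_partition_common_point[OF \<pi> c g c\<^sub>0] by blast
    have "(fst (x (\<pi> p)), c\<^sub>0) \<in> ?S"
      using x bij_betw_apply[OF \<pi>, of p] by (simp add: less_Suc_eq_le)
    with common have "(fst (x (\<pi> p)), c\<^sub>0)
        \<in> (\<Inter>j<m. convex hull (x ` {i. i < Suc (2 * p) \<and> f i = j})) \<inter> ?S"
      by (simp add: less_Suc_eq_le)
    moreover have "\<forall>i<Suc (2 * p). f i < m"
      using f by (simp add: less_Suc_eq_le)
    ultimately show "\<exists>f. (\<forall>i<Suc (2 * p). f i < m) \<and>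
        (\<Inter>j<m. convex hull (x ` {i. i < Suc (2 * p) \<and> f i = j})) \<inter> ?S \<noteq> {}"
      by blast
  qed
  then show ?thesis
    by (simp add: p_def)
qed

section \<open>Two layers without an integer Tverberg point\<close>

lemma convex_sublevel_affine:
  fixes f :: "'a::real_vector \<Rightarrow> real"
  assumes "\<And>x y t. f ((1 - t) *\<^sub>R x + t *\<^sub>R y) = (1 - t) * f x + t * f y"
  shows "convex {x. f x \<le> c}"
  unfolding convex_alt using assms by (auto intro: convex_bound_le)

definition bary :: "'a::euclidean_space \<Rightarrow> 'a \<Rightarrow> real" where
  "bary v q = (if v = 0 then 1 - (\<Sum>b\<in>Basis. q \<bullet> b) else q \<bullet> v)"

lemma bary_vertex:
  assumes "v \<in> insert 0 Basis" "u \<in> insert 0 Basis"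
  shows "bary v u = (if v = u then 1 else 0)"
  using assms by (auto simp: bary_def inner_Basis sum.delta zero_not_in_Basis)

lemma bary_affine: "bary v ((1 - t) *\<^sub>R q + t *\<^sub>R q') = (1 - t) * bary v q + t * bary v q'"
proof -
  have "(\<Sum>b\<in>Basis. ((1 - t) *\<^sub>R q + t *\<^sub>R q') \<bullet> b)
      = (1 - t) * (\<Sum>b\<in>Basis. q \<bullet> b) + t * (\<Sum>b\<in>Basis. q' \<bullet> b)"
    by (simp add: inner_add_left sum.distrib sum_distrib_left)
  then show ?thesis
    by (simp add: bary_def inner_add_left algebra_simps)
qed

lemma sum_bary: "(\<Sum>v\<in>insert 0 Basis. bary v q) = 1"
proof -
  have "(\<Sum>v\<in>Basis. bary v q) = (\<Sum>v\<in>Basis. q \<bullet> v)"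
    by (intro sum.cong) (auto simp: bary_def nonzero_Basis)
  then show ?thesis
    by (simp add: zero_not_in_Basis bary_def)
qed

lemma two_layer_bary_nonpos:
  fixes x :: "nat \<Rightarrow> real \<times> 'a::euclidean_space"
  assumes layers: "\<And>r. r \<in> J \<Longrightarrow> fst (x r) \<in> {0, 1} \<and> snd (x r) \<in> insert 0 Basis"
    and v: "v \<in> insert 0 Basis" and s: "s \<in> {0, 1}"
    and avoid: "\<And>r. r \<in> J \<Longrightarrow> x r \<noteq> (s, v)"
    and P: "P \<in> convex hull (x ` J)" "fst P = s"
  shows "bary v (snd P) \<le> 0"
proof -
  \<comment> \<open>\<open>\<psi>\<close> is affine, agrees with \<open>bary v\<close> on layer \<open>s\<close>, and is \<open>\<le> 0\<close> at every point
    of the two layers except \<open>(s, v)\<close>\<close>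
  define \<psi> where "\<psi> p = bary v (snd p) - (if s = 1 then 1 - fst p else fst p)" for p :: "real \<times> 'a"
  have "convex {p. \<psi> p \<le> 0}"
  proof (rule convex_sublevel_affine)
    fix p p' :: "real \<times> 'a" and t :: real
    show "\<psi> ((1 - t) *\<^sub>R p + t *\<^sub>R p') = (1 - t) * \<psi> p + t * \<psi> p'"
      unfolding \<psi>_def snd_add snd_scaleR fst_add fst_scaleR bary_affine by (simp add: algebra_simps)
  qed
  moreover have "\<psi> (x r) \<le> 0" if r: "r \<in> J" for r
  proof (cases "fst (x r) = s")
    case True
    then have "snd (x r) \<noteq> v"
      using avoid[OF r] by (metis prod.collapse)
    with True show ?thesis
      using layers[OF r] s bary_vertex[OF v, of "snd (x r)"] by (auto simp: \<psi>_def)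
  next
    case False
    then show ?thesis
      using layers[OF r] s bary_vertex[OF v, of "snd (x r)"] by (auto simp: \<psi>_def)
  qed
  ultimately have "convex hull (x ` J) \<subseteq> {p. \<psi> p \<le> 0}"
    by (intro hull_minimal) auto
  with P s show ?thesis
    by (auto simp: \<psi>_def)
qed

lemma two_layer_no_integer_tverberg_point:
  fixes x :: "nat \<Rightarrow> real \<times> 'a::euclidean_space"
  assumes I: "finite I" and m: "0 < m"
    and layers: "\<And>r. r \<in> I \<Longrightarrow> fst (x r) \<in> {0, 1} \<and> snd (x r) \<in> insert 0 Basis"
    and sparse: "\<And>P. card {r \<in> I. x r = P} < m"
  shows "(\<Inter>j<m. convex hull (x ` {r \<in> I. f r = j})) \<inter> {p. fst p \<in> \<int>} = {}"
proof (rule ccontr)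
  assume "(\<Inter>j<m. convex hull (x ` {r \<in> I. f r = j})) \<inter> {p. fst p \<in> \<int>} \<noteq> {}"
  then obtain P where P: "\<And>j. j < m \<Longrightarrow> P \<in> convex hull (x ` {r \<in> I. f r = j})" "fst P \<in> \<int>"
    by blast
  have slab: "x r \<in> {0..1} \<times> UNIV" if "r \<in> I" for r
    using layers[OF that] by (auto simp: mem_Times_iff)
  have "convex hull (x ` {r \<in> I. f r = 0}) \<subseteq> {0..1} \<times> UNIV"
    by (rule hull_minimal) (use slab in blast, auto intro!: convex_Times)
  then have "fst P \<in> {0..1}"
    using P(1)[OF m] by auto
  with P(2) have s: "fst P \<in> {0, 1}"
    by (auto elim!: Ints_cases)
  have "bary v (snd P) \<le> 0" if v: "v \<in> insert 0 Basis" for v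
  proof -
    let ?R = "{r \<in> I. x r = (fst P, v)}"
    have "card (f ` ?R) < m"
      using card_image_le[of ?R f] sparse[of "(fst P, v)"] I by simp
    then have "\<not> {..<m} \<subseteq> f ` ?R"
      using card_mono[of "f ` ?R" "{..<m}"] I by auto
    then obtain j where "j < m" "j \<notin> f ` ?R"
      by auto
    then show ?thesis
      using two_layer_bary_nonpos[of "{r \<in> I. f r = j}" x v "fst P" P] layers v s P(1) by auto
  qed
  then have "(\<Sum>v\<in>insert 0 Basis. bary v (snd P)) \<le> 0"
    by (intro sum_nonpos) auto
  then show False
    by (simp add: sum_bary)
qed

lemma two_layer_configuration:
  "\<exists>x :: nat \<Rightarrow> real \<times> 'a::euclidean_space.
    (\<forall>r<2 * ((m - 1) * (DIM('a) + 1)). fst (x r) \<in> {0, 1} \<and> snd (x r) \<in> insert 0 Basis) \<and>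
    (\<forall>P. card {r \<in> {..<2 * ((m - 1) * (DIM('a) + 1))}. x r = P} \<le> m - 1)"
proof -
  define n where "n = 2 * ((m - 1) * (DIM('a) + 1))"
  define T where "T = (UNIV :: bool set) \<times> insert (0 :: 'a) Basis \<times> {..<m - 1}"
  have "finite T" "card T = n"
    by (simp_all add: T_def n_def card_cartesian_product card_insert_if zero_not_in_Basis)
  then obtain G where G: "bij_betw G {..<n} T"
    by (metis ex_bij_betw_nat_finite lessThan_atLeast0)
  define x where "x r = (if fst (G r) then 1 else 0 :: real, fst (snd (G r)))" for r
  have "fst (x r) \<in> {0, 1} \<and> snd (x r) \<in> insert 0 Basis" if "r < n" for r
    using bij_betw_apply[OF G] that by (auto simp: x_def T_def mem_Times_iff)
  moreover have "card {r \<in> {..<n}. x r = P} \<le> m - 1" for P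
  proof -
    let ?R = "{r \<in> {..<n}. x r = P}"
    have "G r \<in> {fst P = 1} \<times> {snd P} \<times> {..<m - 1}" if "r \<in> ?R" for r
    proof -
      obtain b v k where "G r = (b, v, k)"
        by (cases "G r")
      then show ?thesis
        using bij_betw_apply[OF G, of r] that by (auto simp: x_def T_def split: if_splits)
    qed
    then have "G ` ?R \<subseteq> {fst P = 1} \<times> {snd P} \<times> {..<m - 1}"
      by blast
    then have "card (G ` ?R) \<le> card ({fst P = 1} \<times> {snd P} \<times> {..<m - 1})"
      by (rule card_mono[rotated]) simp
    moreover have "inj_on G ?R"
      using G by (auto simp: bij_betw_def intro: inj_on_subset)
    ultimately show ?thesis
      by (simp add: card_image card_cartesian_product)
  qed
  ultimately show ?thesis
    unfolding n_def by blast
qed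

theorem not_tverberg_prop_integer_layers:
  assumes m: "0 < m"
  shows "\<not> tverberg_prop {p :: real \<times> 'a::euclidean_space. fst p \<in> \<int>} m
    (2 * ((m - 1) * (DIM('a) + 1)))"
    (is "\<not> tverberg_prop ?S m ?n")
proof
  obtain x :: "nat \<Rightarrow> real \<times> 'a"
    where layers: "\<forall>r<?n. fst (x r) \<in> {0, 1} \<and> snd (x r) \<in> insert 0 Basis"
    and sparse: "\<forall>P. card {r \<in> {..<?n}. x r = P} \<le> m - 1"
    using two_layer_configuration by blast
  have "card {r \<in> {..<?n}. x r = P} < m" for P
    using sparse[rule_format, of P] m by linarith
  then have no_point: "(\<Inter>j<m. convex hull (x ` {r \<in> {..<?n}. f r = j})) \<inter> ?S = {}" for f
    using layers by (intro two_layer_no_integer_tverberg_point[OF finite_lessThan m]) auto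
  have "\<forall>r<?n. x r \<in> ?S"
    using layers by (metis Ints_0 Ints_1 insert_iff mem_Collect_eq singletonD)
  moreover assume "tverberg_prop ?S m ?n"
  ultimately obtain f where "(\<Inter>j<m. convex hull (x ` {r. r < ?n \<and> f r = j})) \<inter> ?S \<noteq> {}"
    unfolding tverberg_prop_def by blast
  with no_point[of f] show False
    by simp
qed

lemma tverberg_prop_mono:
  assumes "tverberg_prop S m n" "n \<le> n'" "0 < m"
  shows "tverberg_prop S m n'"
  unfolding tverberg_prop_def
proof (intro allI impI)
  fix x assume "\<forall>i<n'. x i \<in> S"
  then have "\<forall>i<n. x i \<in> S"
    using assms(2) by simp
  then obtain f where f: "\<forall>i<n. f i < m"
    and ne: "(\<Inter>j<m. convex hull (x ` {i. i < n \<and> f i = j})) \<inter> S \<noteq> {}"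
    using assms(1) unfolding tverberg_prop_def by blast
  define f' where "f' i = (if i < n then f i else 0)" for i
  have "convex hull (x ` {i. i < n \<and> f i = j}) \<subseteq> convex hull (x ` {i. i < n' \<and> f' i = j})" for j
    using assms(2) by (intro hull_mono image_mono) (auto simp: f'_def)
  with ne have "(\<Inter>j<m. convex hull (x ` {i. i < n' \<and> f' i = j})) \<inter> S \<noteq> {}"
    by blast
  moreover have "\<forall>i<n'. f' i < m"
    using f assms(3) by (simp add: f'_def)
  ultimately show "\<exists>f. (\<forall>i<n'. f i < m) \<and> (\<Inter>j<m. convex hull (x ` {i. i < n' \<and> f i = j})) \<inter> S \<noteq> {}"
    by blast
qed

lemma Tv_eqI:
  assumes "0 < m" "tverberg_prop S m (n + 1)" "\<not> tverberg_prop S m n"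
  shows "Tv S m = enat (n + 1)"
proof -
  have "(LEAST k. 0 < k \<and> tverberg_prop S m k) = n + 1"
  proof (rule Least_equality)
    show "0 < n + 1 \<and> tverberg_prop S m (n + 1)"
      using assms(2) by simp
    show "n + 1 \<le> k" if "0 < k \<and> tverberg_prop S m k" for k
      using that assms(1,3) tverberg_prop_mono[of S m k n] by (cases "k \<le> n") auto
  qed
  with assms(2) show ?thesis
    unfolding Tv_def by auto
qed

theorem mainTheorem6:
  fixes m :: nat
  assumes "m \<ge> 2"
  shows "Tv {p :: real \<times> (real ^ 'k). fst p \<in> \<int>} m = enat (2 * (m - 1) * (CARD('k) + 1) + 1)"
proof -
  have m: "0 < m"
    using assms by simp
  show ?thesis
    using Tv_eqI[OF m tverberg_prop_integer_layers[OF m, where 'a = "real ^ 'k"]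
        not_tverberg_prop_integer_layers[OF m]]
    by (simp add: mult.assoc)
qed

end
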